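(* Let $F$ be the elementary cellular automaton with rule number 7. For every nonempty finite word $u\in\{0,1\}^*$, the deterministic communication complexity of $\textsc{SInv}_{F,u}$ restricted to inputs of length $n$ is bounded by a constant independent of $n$.
   Context: An elementary cellular automaton (ECA) with rule number $N\in\{0,\dots,255\}$ is the map $F:\{0,1\}^{\mathbb Z}\to\{0,1\}^{\mathbb Z}$ given by $F(x)_i=f(x_{i-1},x_i,x_{i+1})$. Here the local rule $f:\{0,1\}^3\to\{0,1\}$ is determined by $N=\sum_{a,b,c\in\{0,1\}}2^{4a+2b+c}f(a,b,c)$. For a nonempty finite word $u$, $p_u\in\{0,1\}^{\mathbb Z}$ is defined by $(p_u)_i=u_{i\bmod |u|}$. For a finite word $x$, $p_u[x]$ is the configuration equal to $x$ on positions $0,\dots,|x|-1$ and to $p_u$ elsewhere. $\textsc{SInv}_{F,u}$ is the decision problem: on input a finite word $x$, decide whether there is an integer $w$ such that for all $t\ge0$ the set of positions where $F^t(p_u)$ and $F^t(p_u[x])$ differ is contained in an interval of length $w$. For each $n$, it is regarded as a function $\{0,1\}^n\to\{0,1\}$. For a function $g:X\times Y\to Z$, $D(g)$ is the minimal depth of a deterministic two-party protocol computing $g$. In such a protocol, Alice knows $x$ and Bob knows $y$. The protocol is a binary tree: each internal node is labelled by a function of Alice's input only or of Bob's input only, with values in $\{\text{left},\text{right}\}$, and each leaf is labelled by an output value. For $g:\{0,1\}^m\to Z$, set $D(g)=\max_{0\le i<m}D(g_i)$, where $g_i:\{0,1\}^i\times\{0,1\}^{m-i}\to Z$ is $g_i(x,y)=g(xy)$.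 *)

theory Defs
  imports Main
begin

type_synonym config = "int \<Rightarrow> bool"

definition eca_local :: "nat \<Rightarrow> bool \<Rightarrow> bool \<Rightarrow> bool \<Rightarrow> bool" where
  "eca_local N a b c = odd (N div 2 ^ (4 * of_bool a + 2 * of_bool b + of_bool c))"

definition eca :: "nat \<Rightarrow> config \<Rightarrow> config" where
  "eca N x = (\<lambda>i. eca_local N (x (i - 1)) (x i) (x (i + 1)))"

definition per :: "bool list \<Rightarrow> config" where
  "per u = (\<lambda>i. u ! nat (i mod int (length u)))"

definition patch :: "bool list \<Rightarrow> bool list \<Rightarrow> config" where
  "patch u x = (\<lambda>i. if 0 \<le> i \<and> i < int (length x) then x ! nat i else per u i)"

definition SInv :: "nat \<Rightarrow> bool list \<Rightarrow> bool list \<Rightarrow> bool" where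
  "SInv N u x = (\<exists>w::int. \<forall>t::nat. \<exists>a::int.
      {i. (eca N ^^ t) (per u) i \<noteq> (eca N ^^ t) (patch u x) i} \<subseteq> {a..a + w})"

datatype 'z protocol =
    Leaf 'z
  | Alice "bool list \<Rightarrow> bool" "'z protocol" "'z protocol"
  | Bob "bool list \<Rightarrow> bool" "'z protocol" "'z protocol"

fun run :: "'z protocol \<Rightarrow> bool list \<Rightarrow> bool list \<Rightarrow> 'z" where
  "run (Leaf z) x y = z"
| "run (Alice f l r) x y = (if f x then run r x y else run l x y)"
| "run (Bob f l r) x y = (if f y then run r x y else run l x y)"

fun depth :: "'z protocol \<Rightarrow> nat" where
  "depth (Leaf z) = 0"
| "depth (Alice f l r) = Suc (max (depth l) (depth r))"
| "depth (Bob f l r) = Suc (max (depth l) (depth r))"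

definition D_split :: "nat \<Rightarrow> nat \<Rightarrow> (bool list \<Rightarrow> 'z) \<Rightarrow> nat" where
  "D_split m i g = (LEAST d. \<exists>P::'z protocol. depth P = d \<and>
     (\<forall>x y. length x = i \<longrightarrow> length y = m - i \<longrightarrow> run P x y = g (x @ y)))"

text \<open>D(g) = max over 0 \<le> i < m of D(g_i) (0 when m = 0).\<close>
definition D :: "nat \<Rightarrow> (bool list \<Rightarrow> 'z) \<Rightarrow> nat" where
  "D m g = Sup ((\<lambda>i. D_split m i g) ` {..<m})"

end

theory Submission
  imports Defs
begin

(* Rule 7 is  F(x)_i = \<not>x_{i-1} \<and> \<not>(x_i \<and> x_{i+1}).  The proof splits on whether the
   periodic background p_u is one of the two alternating configurations ...0101...

   * If p_u alternates, it is a fixed point of F.  A perturbation of it never heals: its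
     rightmost defect moves right at speed 1, while the leftmost defect stays bounded
     (a conserved quantity of the left front).  Hence SInv(x) holds iff x already agrees
     with p_u, i.e. iff the prefix and the suffix of x both agree with p_u, which Alice
     and Bob check with one bit each.
   * If p_u does not alternate, then every "zigzag" (three alternating cells) of F^t(c)
     comes from zigzags of F(c) or F^2(c) spread over an interval growing linearly
     backwards; since such zigzags are separated by gaps of bounded size, they die out,
     after which F^2 is a shift by one cell.  Then the difference between the two orbits
     only translates, so SInv holds for every input, and a depth-0 protocol suffices. *)

abbreviation rule7 :: "config \<Rightarrow> config" where
  "rule7 \<equiv> eca 7"

section \<open>General facts about elementary cellular automata\<close>

lemma eca_cong:
  assumes "x (i - 1) = y (i - 1)" "x i = y i" "x (i + 1) = y (i + 1)"
  shows "eca N x i = eca N y i"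
  using assms by (simp add: eca_def)

lemma eca_light_cone:
  assumes agree: "\<forall>i. i < lo \<or> hi \<le> i \<longrightarrow> x i = y i"
  shows "i < lo - int t \<or> hi + int t \<le> i \<Longrightarrow> (eca N ^^ t) x i = (eca N ^^ t) y i"
proof (induction t arbitrary: i)
  case 0
  then have "i < lo \<or> hi \<le> i" by simp
  then have "x i = y i" using agree by blast
  then show ?case by simp
next
  case (Suc t)
  have "(eca N ^^ t) x j = (eca N ^^ t) y j" if "j \<in> {i - 1, i, i + 1}" for j
    using Suc.prems that by (intro Suc.IH) auto
  then have "eca N ((eca N ^^ t) x) i = eca N ((eca N ^^ t) y) i"
    by (intro eca_cong) auto
  then show ?case by simp
qed

lemma eca_periodic:
  assumes per: "\<forall>i. z (i + m) = z i"
  shows "(eca N ^^ t) z (i + m) = (eca N ^^ t) z i"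
proof (induction t arbitrary: i)
  case 0
  then show ?case using per by simp
next
  case (Suc t)
  have step: "eca N w (i + m) = eca N w i" if "\<And>d. w (i + m + d) = w (i + d)" for w
    using that[of "-1"] that[of 0] that[of 1] by (simp add: eca_def algebra_simps)
  have "(eca N ^^ t) z (i + m + d) = (eca N ^^ t) z (i + d)" for d
    using Suc.IH[of "i + d"] by (simp add: algebra_simps)
  then show ?case using step by simp
qed

lemma periodic_multiple:
  fixes z :: "int \<Rightarrow> 'a"
  assumes per: "\<forall>i. z (i + m) = z i"
  shows "z (i + q * m) = z i"
proof (induction q rule: int_induct[where k = 0])
  case base
  then show ?case by simp
next
  case (step1 q)
  then show ?case using per[rule_format, of "i + q * m"] by (simp add: algebra_simps)
next
  case (step2 q)
  then show ?case using per[rule_format, of "i + (q - 1) * m"] by (simp add: algebra_simps)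
qed

lemma per_period: "u \<noteq> [] \<Longrightarrow> per u (i + int (length u)) = per u i"
  unfolding per_def by simp

section \<open>Rule 7\<close>

lemma rule7_apply: "rule7 x i = (\<not> x (i - 1) \<and> \<not> (x i \<and> x (i + 1)))"
  by (cases "x (i - 1)"; cases "x i"; cases "x (i + 1)"; simp add: eca_def eca_local_def)

definition alternating :: "config \<Rightarrow> bool" where
  "alternating z = (\<forall>i. z i \<noteq> z (i + 1))"

lemma alternating_next: "alternating z \<Longrightarrow> z (i + 1) = (\<not> z i)"
  unfolding alternating_def by blast

lemma alternating_prev: "alternating z \<Longrightarrow> z (i - 1) = (\<not> z i)"
  using alternating_next[of z "i - 1"] by simp

lemma alternating_fixed: "alternating z \<Longrightarrow> rule7 z = z"
  by (rule ext) (simp add: rule7_apply alternating_prev alternating_next)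

lemma alternating_fixed_iter: "alternating z \<Longrightarrow> (rule7 ^^ t) z = z"
  by (induction t) (simp_all add: alternating_fixed)

lemma alternating_preimage:
  assumes al: "alternating (rule7 x)"
  shows "alternating x"
proof -
  have left: "x (i - 1) = (\<not> rule7 x i)" for i
  proof (cases "rule7 x i")
    case True
    then show ?thesis by (simp add: rule7_apply)
  next
    case False
    then have "rule7 x (i + 1)" using alternating_next[OF al] by blast
    then have "\<not> x i" by (simp add: rule7_apply)
    with False show ?thesis by (simp add: rule7_apply)
  qed
  show ?thesis
    unfolding alternating_def
  proof
    fix i
    have "x (i + 1) = (\<not> rule7 x (i + 2))" using left[of "i + 2"] by (simp add: add.commute)
    then show "x i \<noteq> x (i + 1)"
      using left[of "i + 1"] alternating_next[OF al, of "i + 1"] by (simp add: add.assoc)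
  qed
qed

lemma alternating_preimage_iter: "alternating ((rule7 ^^ t) x) \<Longrightarrow> alternating x"
  by (induction t) (auto dest: alternating_preimage)

section \<open>Zigzags and the eventual shift\<close>

definition zigzag :: "config \<Rightarrow> int \<Rightarrow> bool" where
  "zigzag y i = (y (i - 2) \<noteq> y (i - 1) \<and> y (i - 1) \<noteq> y i)"

lemma rule7_shift:
  "\<not> zigzag (rule7 x) i \<Longrightarrow> rule7 (rule7 (rule7 x)) i = rule7 x (i - 1)"
  unfolding zigzag_def rule7_apply by (simp add: algebra_simps) argo

lemma zigzag_predecessors:
  "zigzag (rule7 (rule7 (rule7 x))) i \<Longrightarrow> zigzag (rule7 x) (i - 1) \<and> zigzag (rule7 x) (i - 2)"
  unfolding zigzag_def rule7_apply by (simp add: algebra_simps) argo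

lemma zigzag_backward_cone:
  assumes s: "1 \<le> s"
  shows "zigzag ((rule7 ^^ (s + 2 * k)) c) i \<Longrightarrow> i - 2 * int k \<le> j \<Longrightarrow> j \<le> i - int k
     \<Longrightarrow> zigzag ((rule7 ^^ s) c) j"
proof (induction k arbitrary: i j)
  case 0
  then show ?case by simp
next
  case (Suc k)
  obtain d where d: "s + 2 * k = Suc d" using s by (cases "s + 2 * k") auto
  have "(rule7 ^^ (s + 2 * Suc k)) c = rule7 (rule7 (rule7 ((rule7 ^^ d) c)))"
    using d by (simp add: numeral_eq_Suc)
  with Suc.prems(1) have "zigzag (rule7 (rule7 (rule7 ((rule7 ^^ d) c)))) i" by simp
  from zigzag_predecessors[OF this] d
  have "zigzag ((rule7 ^^ (s + 2 * k)) c) (i - 1)" "zigzag ((rule7 ^^ (s + 2 * k)) c) (i - 2)"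
    by simp_all
  then show ?case
  proof (cases "i - 1 - 2 * int k \<le> j")
    case True
    then show ?thesis using Suc.IH[of "i - 1" j] \<open>zigzag _ (i - 1)\<close> Suc.prems(3) by simp
  next
    case False
    then show ?thesis using Suc.IH[of "i - 2" j] \<open>zigzag _ (i - 2)\<close> Suc.prems(2) by simp
  qed
qed

definition zigzag_gaps :: "config \<Rightarrow> int \<Rightarrow> bool" where
  "zigzag_gaps z K = (\<forall>a. \<exists>j. a \<le> j \<and> j \<le> a + K \<and> \<not> zigzag z j)"

lemma zigzag_gaps_mono: "zigzag_gaps z K \<Longrightarrow> K \<le> K' \<Longrightarrow> zigzag_gaps z K'"
  unfolding zigzag_gaps_def by (meson add_left_mono order_trans)

text \<open>A non-alternating periodic configuration has a site with two equal neighbours in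
  every period, hence zigzag gaps of size at most the period.\<close>
lemma periodic_zigzag_gaps:
  assumes per: "\<forall>i. z (i + m) = z i" and m: "0 < m" and na: "\<not> alternating z"
  shows "zigzag_gaps z m"
  unfolding zigzag_gaps_def
proof
  fix a
  obtain i0 where i0: "z i0 = z (i0 + 1)" using na unfolding alternating_def by blast
  define i where "i = a + (i0 - a) mod m"
  have "i0 = i + ((i0 - a) div m) * m" "i0 + 1 = (i + 1) + ((i0 - a) div m) * m"
    unfolding i_def by (simp_all add: algebra_simps)
  then have "z i = z (i + 1)"
    using i0 periodic_multiple[OF per, of i] periodic_multiple[OF per, of "i + 1"] by metis
  moreover have "a \<le> i" "i < a + m" unfolding i_def using m by simp_all
  ultimately show "\<exists>j. a \<le> j \<and> j \<le> a + m \<and> \<not> zigzag z j"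
    by (intro exI[of _ "i + 1"]) (simp add: zigzag_def)
qed

lemma zigzag_gaps_perturbed:
  assumes gaps: "zigzag_gaps b m" and agree: "\<forall>i. i < lo \<or> hi \<le> i \<longrightarrow> c i = b i"
    and lohi: "lo \<le> hi" and W: "hi - lo + 2 * m + 2 \<le> W"
  shows "zigzag_gaps c W"
  unfolding zigzag_gaps_def
proof
  fix a
  have m: "0 \<le> m" using gaps unfolding zigzag_gaps_def by fastforce
  have same: "zigzag c j = zigzag b j" if "j < lo \<or> hi + 2 \<le> j" for j
  proof -
    have "c (j - 2) = b (j - 2)" "c (j - 1) = b (j - 1)" "c j = b j"
      using agree that by auto
    then show ?thesis unfolding zigzag_def by simp
  qed
  show "\<exists>j. a \<le> j \<and> j \<le> a + W \<and> \<not> zigzag c j"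
  proof (cases "a + m < lo")
    case True
    obtain j where "a \<le> j" "j \<le> a + m" "\<not> zigzag b j" using gaps unfolding zigzag_gaps_def by blast
    then show ?thesis using same[of j] True W m lohi by (intro exI[of _ j]) auto
  next
    case False
    obtain j where "a + W - m \<le> j" "j \<le> a + W - m + m" "\<not> zigzag b j"
      using gaps unfolding zigzag_gaps_def by blast
    then show ?thesis using same[of j] False W m lohi by (intro exI[of _ j]) auto
  qed
qed

lemma zigzags_die_out:
  assumes s: "1 \<le> s" and gaps: "zigzag_gaps ((rule7 ^^ s) c) K" and k: "K \<le> int k"
  shows "\<not> zigzag ((rule7 ^^ (s + 2 * k)) c) i"
proof
  assume zz: "zigzag ((rule7 ^^ (s + 2 * k)) c) i"
  obtain j where j: "i - 2 * int k \<le> j" "j \<le> i - 2 * int k + K" "\<not> zigzag ((rule7 ^^ s) c) j"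
    using gaps unfolding zigzag_gaps_def by blast
  then show False using zigzag_backward_cone[OF s zz, of j] k by simp
qed

lemma eventually_shift:
  assumes gaps1: "zigzag_gaps ((rule7 ^^ 1) c) K" and gaps2: "zigzag_gaps ((rule7 ^^ 2) c) K"
    and t: "1 + 2 * nat K \<le> t"
  shows "(rule7 ^^ (t + 2)) c i = (rule7 ^^ t) c (i - 1)"
proof -
  define s where "s = 1 + (t - 1) mod 2"
  define k where "k = (t - 1) div 2"
  have ts: "t = s + 2 * k" using t unfolding s_def k_def by simp
  have "nat K \<le> k" using t unfolding k_def by simp
  then have k: "K \<le> int k" by linarith
  have "s = 1 \<or> s = 2" unfolding s_def by auto
  then have no_zz: "\<not> zigzag ((rule7 ^^ t) c) i"
    using zigzags_die_out[OF _ gaps1 k] zigzags_die_out[OF _ gaps2 k] ts by auto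
  obtain d where d: "t = Suc d" using t by (cases t) auto
  show ?thesis using rule7_shift[of "(rule7 ^^ d) c" i] no_zz d by simp
qed

lemma rigid_shift:
  fixes f :: "nat \<Rightarrow> int \<Rightarrow> 'a"
  assumes shift: "\<forall>t\<ge>T. \<forall>i. f (t + 2) i = f t (i - 1)" and t0: "T \<le> t0"
  shows "f (t0 + 2 * k) i = f t0 (i - int k)"
proof (induction k arbitrary: i)
  case 0
  then show ?case by simp
next
  case (Suc k)
  have "f (t0 + 2 * Suc k) i = f (t0 + 2 * k) (i - 1)"
    using shift t0 by (simp add: add.assoc)
  also have "\<dots> = f t0 (i - int (Suc k))"
    using Suc.IH by (simp add: algebra_simps)
  finally show ?case .
qed

lemma eventual_shift_bounded_difference:
  fixes f g :: "nat \<Rightarrow> int \<Rightarrow> bool"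
  assumes cone: "\<And>t i. f t i \<noteq> g t i \<Longrightarrow> - int t \<le> i \<and> i < n + int t"
    and f_shift: "\<forall>t\<ge>T. \<forall>i. f (t + 2) i = f t (i - 1)"
    and g_shift: "\<forall>t\<ge>T. \<forall>i. g (t + 2) i = g t (i - 1)"
  shows "\<exists>a. {i. f t i \<noteq> g t i} \<subseteq> {a..a + (n + 2 * int T + 2)}"
proof (cases "t < T")
  case True
  have "- int t \<le> i \<and> i \<le> - int t + (n + 2 * int T + 2)" if "f t i \<noteq> g t i" for i
    using cone[OF that] True by linarith
  then show ?thesis by (intro exI[of _ "- int t"]) auto
next
  case False
  define t0 where "t0 = T + (t - T) mod 2"
  define k where "k = (t - T) div 2"
  have t: "t = t0 + 2 * k" "T \<le> t0" "t0 \<le> T + 1" using False unfolding t0_def k_def by auto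
  have "int k - int t0 \<le> i \<and> i \<le> int k - int t0 + (n + 2 * int T + 2)" if "f t i \<noteq> g t i" for i
  proof -
    have "f t0 (i - int k) \<noteq> g t0 (i - int k)"
      using that rigid_shift[OF f_shift t(2), of k i] rigid_shift[OF g_shift t(2), of k i] t(1) by simp
    from cone[OF this] show ?thesis using t(3) by linarith
  qed
  then show ?thesis by (intro exI[of _ "int k - int t0"]) auto
qed

section \<open>Non-alternating background: every perturbation stays bounded\<close>

text \<open>Both orbits eventually shift rigidly, so their difference stays in a window of
  fixed width.\<close>
lemma nonalternating_SInv:
  assumes u: "u \<noteq> []" and na: "\<not> alternating (per u)"
  shows "SInv 7 u x"
proof -
  define m where "m = int (length u)"
  define n where "n = int (length x)"
  define b where "b t = (rule7 ^^ t) (per u)" for t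
  define y where "y t = (rule7 ^^ t) (patch u x)" for t
  have agree: "\<forall>i. i < 0 \<or> n \<le> i \<longrightarrow> patch u x i = per u i"
    unfolding patch_def n_def by auto
  have cone: "- int t \<le> i \<and> i < n + int t" if "b t i \<noteq> y t i" for t i
    using that eca_light_cone[OF agree, of i t] unfolding b_def y_def by fastforce
  have m: "0 < m" using u unfolding m_def by simp
  have b_gaps: "zigzag_gaps (b t) m" for t
  proof (rule periodic_zigzag_gaps[OF _ m])
    show "\<forall>i. b t (i + m) = b t i"
      unfolding b_def m_def using eca_periodic per_period[OF u] by blast
    show "\<not> alternating (b t)" using na alternating_preimage_iter unfolding b_def by blast
  qed
  define K where "K = n + 2 * m + 6"
  have "0 \<le> n" unfolding n_def by simp
  then have b_gaps_K: "zigzag_gaps (b t) K" for t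
    using m by (intro zigzag_gaps_mono[OF b_gaps]) (simp add: K_def)
  have y_gaps_K: "zigzag_gaps (y s) K" if "s \<le> 2" for s
  proof (rule zigzag_gaps_perturbed[OF b_gaps])
    show "\<forall>i. i < - int s \<or> n + int s \<le> i \<longrightarrow> y s i = b s i" using cone by fastforce
  qed (use that \<open>0 \<le> n\<close> in \<open>auto simp: K_def\<close>)
  define T where "T = 1 + 2 * nat K"
  have "\<forall>t\<ge>T. \<forall>i. b (t + 2) i = b t (i - 1)"
    using eventually_shift b_gaps_K unfolding b_def T_def by blast
  moreover have "zigzag_gaps ((rule7 ^^ 1) (patch u x)) K" "zigzag_gaps ((rule7 ^^ 2) (patch u x)) K"
    using y_gaps_K[of 1] y_gaps_K[of 2] unfolding y_def by simp_all
  then have "\<forall>t\<ge>T. \<forall>i. y (t + 2) i = y t (i - 1)"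
    using eventually_shift unfolding y_def T_def by blast
  ultimately have "\<exists>a. {i. b t i \<noteq> y t i} \<subseteq> {a..a + (n + 2 * int T + 2)}" for t
    using eventual_shift_bounded_difference cone by blast
  then show ?thesis unfolding SInv_def b_def y_def by blast
qed

section \<open>Alternating background: perturbations grow without bound\<close>

lemma far_from_front:
  assumes al: "alternating p" and left: "\<forall>j<L. q j = p j" and j: "j + 1 < L"
  shows "rule7 q j = p j"
proof -
  have "rule7 q j = rule7 p j" using left j by (intro eca_cong) auto
  also have "\<dots> = p j" using alternating_fixed[OF al] by simp
  finally show ?thesis .
qed

lemma right_front_step:
  assumes al: "alternating p" and right: "\<forall>j>r. q j = p j" and d: "q r \<noteq> p r"
  shows "rule7 q (r + 1) \<noteq> p (r + 1) \<and> (\<forall>j>r + 1. rule7 q j = p j)"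
proof
  have "q (r + 1) = p (r + 1)" "q (r + 1 + 1) = p (r + 1 + 1)" using right by auto
  moreover have "p (r + 1) = (\<not> p r)" "p (r + 1 + 1) = (\<not> p (r + 1))"
    using alternating_next[OF al] by blast+
  ultimately show "rule7 q (r + 1) \<noteq> p (r + 1)" using d by (simp add: rule7_apply)
next
  show "\<forall>j>r + 1. rule7 q j = p j"
  proof (intro allI impI)
    fix j assume "j > r + 1"
    then have "rule7 q j = rule7 p j" using right by (intro eca_cong) auto
    then show "rule7 q j = p j" using alternating_fixed[OF al] by simp
  qed
qed

definition left_front :: "config \<Rightarrow> config \<Rightarrow> int \<Rightarrow> bool" where
  "left_front p q L = ((\<forall>j<L. q j = p j) \<and> q L \<noteq> p L \<and> (q L \<or> \<not> q (L + 1)))"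

text \<open>The left front alternately moves left and right, conserving L + [q L = 0].\<close>
lemma left_front_step:
  assumes al: "alternating p" and front: "left_front p q L"
  shows "\<exists>L'. left_front p (rule7 q) L' \<and> L' + of_bool (\<not> rule7 q L') = L + of_bool (\<not> q L)"
proof -
  have left: "\<forall>j<L. q j = p j" and d: "q L \<noteq> p L" and c: "q L \<or> \<not> q (L + 1)"
    using front unfolding left_front_def by auto
  have pm1: "p (L - 1) = (\<not> p L)" and pm2: "p (L - 1 - 1) = (\<not> p (L - 1))"
    and pp1: "p (L + 1) = (\<not> p L)"
    using alternating_prev[OF al] alternating_next[OF al] by blast+
  have qm1: "q (L - 1) = p (L - 1)" and qm2: "q (L - 1 - 1) = p (L - 1 - 1)" using left by auto
  show ?thesis
  proof (cases "q L")
    case True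
    then have pL: "\<not> p L" using d by simp
    have g1: "\<not> rule7 q (L - 1)" and g0: "\<not> rule7 q L"
      using True qm1 pm1 pL by (simp_all add: rule7_apply)
    have "left_front p (rule7 q) (L - 1)"
      unfolding left_front_def using far_from_front[OF al left] g1 g0 pm1 pL by auto
    then show ?thesis using g1 True by (intro exI[of _ "L - 1"]) simp
  next
    case False
    then have pL: "p L" and nq1: "\<not> q (L + 1)" using d c by simp_all
    have g1: "rule7 q (L + 1)" and g0: "rule7 q L" and gm: "\<not> rule7 q (L - 1)"
      using False nq1 qm1 qm2 pm1 pm2 pL by (simp_all add: rule7_apply)
    have "rule7 q j = p j" if "j < L + 1" for j
    proof (cases "j + 1 < L")
      case True
      then show ?thesis using far_from_front[OF al left] by blast
    next
      case False
      then have "j = L \<or> j = L - 1" using that by linarith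
      then show ?thesis using g0 gm pm1 pL by auto
    qed
    then have "left_front p (rule7 q) (L + 1)"
      unfolding left_front_def using g1 pp1 pL by auto
    then show ?thesis using g1 False by (intro exI[of _ "L + 1"]) simp
  qed
qed

lemma rule7_image_avoids_1001:
  "rule7 x (i - 2) \<Longrightarrow> \<not> rule7 x (i - 1) \<Longrightarrow> \<not> rule7 x i \<Longrightarrow> rule7 x (i + 1) \<Longrightarrow> False"
  unfolding rule7_apply by (simp add: algebra_simps)

lemma leftmost_difference:
  fixes p q :: "int \<Rightarrow> 'a"
  assumes d: "q r \<noteq> p r" and agree: "\<forall>j<lo. q j = p j"
  shows "\<exists>L. (\<forall>j<L. q j = p j) \<and> q L \<noteq> p L"
proof -
  define S where "S = {i. lo \<le> i \<and> i \<le> r \<and> q i \<noteq> p i}"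
  have fin: "finite S" unfolding S_def by (rule finite_subset[of _ "{lo..r}"]) auto
  have "r \<in> S" using d agree unfolding S_def by force
  then have "Min S \<in> S" using fin by (intro Min_in) auto
  moreover have "q j = p j" if j: "j < Min S" for j
  proof (rule ccontr)
    assume "q j \<noteq> p j"
    moreover have "Min S \<le> r" using fin \<open>r \<in> S\<close> by simp
    ultimately have "j \<in> S" using j agree unfolding S_def by force
    then show False using j Min_le[OF fin] by fastforce
  qed
  ultimately show ?thesis unfolding S_def by blast
qed

lemma rightmost_difference:
  fixes p q :: "int \<Rightarrow> 'a"
  assumes d: "q r \<noteq> p r" and agree: "\<forall>j\<ge>hi. q j = p j"
  shows "\<exists>R. (\<forall>j>R. q j = p j) \<and> q R \<noteq> p R"
proof -
  obtain L where L: "\<forall>j<L. q (- j) = p (- j)" "q (- L) \<noteq> p (- L)"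
    using leftmost_difference[of "\<lambda>i. q (- i)" "- r" "\<lambda>i. p (- i)" "1 - hi"] d agree by auto
  have "q j = p j" if "- L < j" for j
    using L(1)[rule_format, of "- j"] that by simp
  then show ?thesis using L(2) by blast
qed

lemma defect_escapes_right:
  assumes al: "alternating p" and d: "q r \<noteq> p r" and agree: "\<forall>j\<ge>hi. q j = p j"
  shows "\<exists>R. \<forall>t. (rule7 ^^ t) q (R + int t) \<noteq> p (R + int t)"
proof -
  obtain R where R: "\<forall>j>R. q j = p j" "q R \<noteq> p R" using rightmost_difference[OF d agree] by blast
  have "(rule7 ^^ t) q (R + int t) \<noteq> p (R + int t) \<and> (\<forall>j>R + int t. (rule7 ^^ t) q j = p j)" for t
  proof (induction t)
    case 0
    then show ?case using R by simp
  next
    case (Suc t)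
    have "R + int (Suc t) = (R + int t) + 1" "(rule7 ^^ Suc t) q = rule7 ((rule7 ^^ t) q)" by simp_all
    then show ?case
      using right_front_step[OF al conjunct2[OF Suc.IH] conjunct1[OF Suc.IH]] by presburger
  qed
  then show ?thesis by blast
qed

lemma defect_bounded_left:
  assumes al: "alternating p" and agree: "\<forall>j<lo. q j = p j" and d: "rule7 q r \<noteq> p r"
  shows "\<exists>B. \<forall>t. \<exists>L\<le>B. (rule7 ^^ Suc t) q L \<noteq> p L"
proof -
  have "\<forall>j<lo - 1. rule7 q j = p j" using far_from_front[OF al agree] by auto
  then obtain L1 where left1: "\<forall>j<L1. rule7 q j = p j" and d1: "rule7 q L1 \<noteq> p L1"
    using leftmost_difference[of "rule7 q" r p "lo - 1"] d by blast
  have "rule7 q L1 \<or> \<not> rule7 q (L1 + 1)"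
  proof (rule ccontr)
    assume "\<not> ?thesis"
    moreover have "p (L1 - 1) = (\<not> p L1)" "p (L1 - 2) = (\<not> p (L1 - 1))"
      using alternating_prev[OF al, of L1] alternating_prev[OF al, of "L1 - 1"] by simp_all
    ultimately show False
      using rule7_image_avoids_1001[of q L1] left1 d1 by fastforce
  qed
  then have start: "left_front p (rule7 q) L1" unfolding left_front_def using left1 d1 by blast
  have "\<exists>L. left_front p ((rule7 ^^ Suc t) q) L \<and>
      L + of_bool (\<not> (rule7 ^^ Suc t) q L) = L1 + of_bool (\<not> rule7 q L1)" for t
  proof (induction t)
    case 0
    then show ?case using start by auto
  next
    case (Suc t)
    then show ?case using left_front_step[OF al] by fastforce
  qed
  then have "\<exists>L\<le>L1 + 1. (rule7 ^^ Suc t) q L \<noteq> p L" for t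
    unfolding left_front_def by (smt (verit) of_bool_def)
  then show ?thesis by blast
qed

definition matches :: "config \<Rightarrow> int \<Rightarrow> bool list \<Rightarrow> bool" where
  "matches z off w = (\<forall>k<length w. w ! k = z (off + int k))"

lemma matches_append:
  "matches z off (x @ y) \<longleftrightarrow> matches z off x \<and> matches z (off + int (length x)) y"
proof -
  have split: "(\<forall>k<length x + length y. P k) \<longleftrightarrow>
      (\<forall>k<length x. P k) \<and> (\<forall>k<length y. P (length x + k))" for P
  proof
    assume h: "(\<forall>k<length x. P k) \<and> (\<forall>k<length y. P (length x + k))"
    show "\<forall>k<length x + length y. P k"
    proof (intro allI impI)
      fix k
      assume "k < length x + length y"
      then show "P k" using h by (cases "k < length x") (auto dest: spec[of _ "k - length x"])
    qed
  qed auto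
  show ?thesis
    unfolding matches_def length_append split by (simp add: nth_append algebra_simps)
qed

text \<open>On an alternating background, the difference stays bounded only if there is none:
  otherwise its right end escapes while its left end stays put.\<close>
lemma alternating_SInv:
  assumes al: "alternating (per u)"
  shows "SInv 7 u x \<longleftrightarrow> matches (per u) 0 x"
proof
  assume "matches (per u) 0 x"
  then have "patch u x i = per u i" for i
    unfolding matches_def patch_def by (cases "0 \<le> i \<and> i < int (length x)") auto
  then have "patch u x = per u" by blast
  then show "SInv 7 u x" unfolding SInv_def by simp
next
  assume S: "SInv 7 u x"
  define p where "p = per u"
  define q where "q = patch u x"
  have al_p: "alternating p" using al unfolding p_def .
  obtain w where w: "\<forall>t. \<exists>a. {i. (rule7 ^^ t) p i \<noteq> (rule7 ^^ t) q i} \<subseteq> {a..a + w}"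
    using S unfolding SInv_def p_def q_def by blast
  show "matches (per u) 0 x"
  proof (rule ccontr)
    assume "\<not> matches (per u) 0 x"
    then obtain k where k: "k < length x" "x ! k \<noteq> per u (int k)"
      unfolding matches_def by auto
    then have defect: "q (int k) \<noteq> p (int k)" unfolding p_def q_def patch_def by simp
    have agree_right: "\<forall>j\<ge>int (length x). q j = p j" and agree_left: "\<forall>j<0. q j = p j"
      unfolding p_def q_def patch_def by auto
    obtain R where R: "\<forall>t. (rule7 ^^ t) q (R + int t) \<noteq> p (R + int t)"
      using defect_escapes_right[OF al_p defect agree_right] by blast
    have "rule7 q (R + 1) \<noteq> p (R + 1)" using R[rule_format, of 1] by simp
    then obtain B where B: "\<forall>t. \<exists>L\<le>B. (rule7 ^^ Suc t) q L \<noteq> p L"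
      using defect_bounded_left[OF al_p agree_left] by blast
    define t where "t = nat (w + B - R + 1)"
    obtain a where a: "{i. p i \<noteq> (rule7 ^^ Suc t) q i} \<subseteq> {a..a + w}"
      using w alternating_fixed_iter[OF al_p] by metis
    obtain L where "L \<le> B" "(rule7 ^^ Suc t) q L \<noteq> p L" using B by blast
    then have "a \<le> B" using a by force
    moreover have "R + int (Suc t) \<le> a + w" using a R[rule_format, of "Suc t"] by force
    ultimately show False unfolding t_def by linarith
  qed
qed

section \<open>Communication complexity\<close>

lemma D_split_le_depth:
  assumes "\<forall>x y. length x = i \<longrightarrow> length y = m - i \<longrightarrow> run P x y = g (x @ y)"
  shows "D_split m i g \<le> depth P"
  unfolding D_split_def using assms by (intro Least_le) blast

lemma D_le: "(\<And>i. i < m \<Longrightarrow> D_split m i g \<le> c) \<Longrightarrow> D m g \<le> c"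
  unfolding D_def by (cases "m = 0") (auto intro: cSup_least)

text \<open>Either SInv is constantly true, or Alice and Bob each test their part against p_u.\<close>
lemma D_split_SInv7:
  assumes u: "u \<noteq> []"
  shows "D_split n i (SInv 7 u) \<le> 2"
proof (cases "alternating (per u)")
  case False
  have "D_split n i (SInv 7 u) \<le> depth (Leaf True)"
    by (rule D_split_le_depth) (simp add: nonalternating_SInv[OF u False])
  then show ?thesis by simp
next
  case True
  define P where "P = Alice (matches (per u) 0) (Leaf False)
    (Bob (matches (per u) (int i)) (Leaf False) (Leaf True))"
  have "D_split n i (SInv 7 u) \<le> depth P"
    by (rule D_split_le_depth) (simp add: P_def alternating_SInv[OF True] matches_append)
  then show ?thesis unfolding P_def by simp
qed

theorem mainTheorem4:
  fixes u :: "bool list"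
  assumes "u \<noteq> []"
  shows "\<exists>c::nat. \<forall>n::nat. D n (SInv 7 u) \<le> c"
  using D_le D_split_SInv7[OF assms] by blast

end
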